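(* Let $G$ be a connected graph, let $uv\in E(G)$, and let $G'$ be the graph obtained from $G$ by subdividing the edge $uv$ three times (i.e., replacing the edge $uv$ by a path $u x_1 x_2 x_3 v$ with three new vertices $x_1,x_2,x_3$). If $\gamma^{d}_2(G)\leq \frac{|V(G)|}{3}$, then $\gamma^{d}_2(G')\leq \frac{|V(G')|}{3}$.
   Context: All graphs are finite and simple. A set $S$ of vertices of a graph $G$ is a disjunctive dominating set of $G$ if every vertex not in $S$ is adjacent to a vertex of $S$ or has at least two vertices of $S$ at distance exactly $2$ from it in $G$. The disjunctive domination number $\gamma^{d}_2(G)$ is the minimum cardinality of a disjunctive dominating set of $G$. *)

theory Defs
  imports Complex_Main
begin

definition simple_graph :: "'a set \<Rightarrow> ('a \<Rightarrow> 'a \<Rightarrow> bool) \<Rightarrow> bool" where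
  "simple_graph V E \<longleftrightarrow> finite V \<and> (\<forall>x y. E x y \<longrightarrow> x \<in> V \<and> y \<in> V)
     \<and> (\<forall>x y. E x y \<longrightarrow> E y x) \<and> (\<forall>x. \<not> E x x)"

fun walk :: "('a \<Rightarrow> 'a \<Rightarrow> bool) \<Rightarrow> nat \<Rightarrow> 'a \<Rightarrow> 'a \<Rightarrow> bool" where
  "walk E 0 x y \<longleftrightarrow> x = y"
| "walk E (Suc n) x y \<longleftrightarrow> (\<exists>z. E x z \<and> walk E n z y)"

definition connected_graph :: "'a set \<Rightarrow> ('a \<Rightarrow> 'a \<Rightarrow> bool) \<Rightarrow> bool" where
  "connected_graph V E \<longleftrightarrow> V \<noteq> {} \<and> (\<forall>x\<in>V. \<forall>y\<in>V. \<exists>n. walk E n x y)"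

text \<open>Graph distance (length of a shortest walk); only used for connected pairs.\<close>
definition gdist :: "('a \<Rightarrow> 'a \<Rightarrow> bool) \<Rightarrow> 'a \<Rightarrow> 'a \<Rightarrow> nat" where
  "gdist E x y = (LEAST n. walk E n x y)"

definition disj_dom_set :: "'a set \<Rightarrow> ('a \<Rightarrow> 'a \<Rightarrow> bool) \<Rightarrow> 'a set \<Rightarrow> bool" where
  "disj_dom_set V E S \<longleftrightarrow> S \<subseteq> V \<and>
     (\<forall>x\<in>V - S. (\<exists>s\<in>S. E x s) \<or>
        2 \<le> card {s\<in>S. (\<exists>n. walk E n x s) \<and> gdist E x s = 2})"

definition disj_dom_num :: "'a set \<Rightarrow> ('a \<Rightarrow> 'a \<Rightarrow> bool) \<Rightarrow> nat" where
  "disj_dom_num V E = (LEAST k. \<exists>S. disj_dom_set V E S \<and> card S = k)"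

definition subdiv3_edges ::
  "('a \<Rightarrow> 'a \<Rightarrow> bool) \<Rightarrow> 'a \<Rightarrow> 'a \<Rightarrow> 'a \<Rightarrow> 'a \<Rightarrow> 'a \<Rightarrow> 'a \<Rightarrow> 'a \<Rightarrow> bool" where
  "subdiv3_edges E u v x1 x2 x3 = (\<lambda>a b.
     (E a b \<and> {a, b} \<noteq> {u, v}) \<or>
     {a, b} = {u, x1} \<or> {a, b} = {x1, x2} \<or> {a, b} = {x2, x3} \<or> {a, b} = {x3, v})"

end

theory Submission
  imports Defs
begin

text \<open>Adding one vertex of the new path to a minimum disjunctive dominating set S of G gives
  one of G'. If u \<in> S, add x3: then x1, x2 and v are adjacent to the new set, and an old vertex
  that loses u as a vertex at distance two (through v) gains x3 instead. If u, v \<notin> S but v has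
  a neighbour s \<in> S, add x1: then x3 has x1 and s at distance two. If neither u nor v is in S or
  adjacent to S, add x2: the distance-two witnesses of u and v do not use the edge uv. The
  remaining cases are symmetric. So the disjunctive domination number grows by at most one while
  the order grows by three.\<close>

definition at_distance_two :: "('a \<Rightarrow> 'a \<Rightarrow> bool) \<Rightarrow> 'a \<Rightarrow> 'a \<Rightarrow> bool" where
  "at_distance_two E x y \<longleftrightarrow> x \<noteq> y \<and> \<not> E x y \<and> (\<exists>m. E x m \<and> E m y)"

definition disj_dominated :: "('a \<Rightarrow> 'a \<Rightarrow> bool) \<Rightarrow> 'a set \<Rightarrow> 'a \<Rightarrow> bool" where
  "disj_dominated E S x \<longleftrightarrow> (\<exists>s\<in>S. E x s) \<or> 2 \<le> card {s\<in>S. at_distance_two E x s}"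

lemma walk_2_iff: "walk E 2 x y \<longleftrightarrow> (\<exists>m. E x m \<and> E m y)"
  by (simp add: numeral_2_eq_2)

lemma gdist_eq_2_iff_at_distance_two:
  "(\<exists>n. walk E n x y) \<and> gdist E x y = 2 \<longleftrightarrow> at_distance_two E x y"
proof
  assume reach: "(\<exists>n. walk E n x y) \<and> gdist E x y = 2"
  then have shortest: "walk E (gdist E x y) x y"
    unfolding gdist_def by (metis LeastI_ex)
  have "2 \<le> k" if "walk E k x y" for k
    using reach that unfolding gdist_def by (metis Least_le)
  then have "\<not> walk E 0 x y" "\<not> walk E (Suc 0) x y" by fastforce+
  then show "at_distance_two E x y"
    using shortest reach unfolding at_distance_two_def walk_2_iff[symmetric] by auto
next
  assume d2: "at_distance_two E x y"
  then have walk2: "walk E 2 x y" unfolding at_distance_two_def walk_2_iff by auto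
  have "gdist E x y = 2" unfolding gdist_def
  proof (rule Least_equality)
    show "2 \<le> k" if "walk E k x y" for k
      using that d2 unfolding at_distance_two_def by (cases k; cases "k - 1"; auto)
  qed (fact walk2)
  then show "(\<exists>n. walk E n x y) \<and> gdist E x y = 2" using walk2 by blast
qed

lemma disj_dom_set_iff:
  "disj_dom_set V E S \<longleftrightarrow> S \<subseteq> V \<and> (\<forall>x\<in>V - S. disj_dominated E S x)"
  unfolding disj_dom_set_def disj_dominated_def gdist_eq_2_iff_at_distance_two ..

lemma disj_dom_num_le: "disj_dom_set V E S \<Longrightarrow> disj_dom_num V E \<le> card S"
  unfolding disj_dom_num_def by (rule Least_le) blast

lemma ex_min_disj_dom_set: "\<exists>S. disj_dom_set V E S \<and> card S = disj_dom_num V E"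
proof -
  have "disj_dom_set V E V" unfolding disj_dom_set_def by blast
  then have "\<exists>k S. disj_dom_set V E S \<and> card S = k" by blast
  then show ?thesis unfolding disj_dom_num_def by (rule LeastI_ex)
qed

lemma ex_other_if_card_ge_2: "2 \<le> card A \<Longrightarrow> \<exists>a\<in>A. a \<noteq> b"
  by (metis card_le_Suc0_iff_eq card.infinite not_less_eq_eq numeral_2_eq_2 zero_less_Suc leD)

lemma card_ge_2_if_distinct: "finite A \<Longrightarrow> {a, b} \<subseteq> A \<Longrightarrow> a \<noteq> b \<Longrightarrow> 2 \<le> card A"
  by (metis card_2_iff card_mono)

lemma disj_dominated_mono:
  assumes dom: "disj_dominated E S x" and "S \<subseteq> T" "finite T"
    and edge: "\<And>s. s \<in> S \<Longrightarrow> E x s \<Longrightarrow> F x s"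
    and dist2: "\<And>c. c \<in> S \<Longrightarrow> \<forall>s\<in>S. \<not> E x s \<Longrightarrow>
      at_distance_two E x c \<Longrightarrow> at_distance_two F x c"
  shows "disj_dominated F T x"
proof (cases "\<exists>s\<in>S. E x s")
  case True
  then show ?thesis using edge \<open>S \<subseteq> T\<close> unfolding disj_dominated_def by blast
next
  case False
  have "{s\<in>S. at_distance_two E x s} \<subseteq> {s\<in>T. at_distance_two F x s}"
    using dist2 False \<open>S \<subseteq> T\<close> by blast
  then have "card {s\<in>S. at_distance_two E x s} \<le> card {s\<in>T. at_distance_two F x s}"
    by (rule card_mono[rotated]) (use \<open>finite T\<close> in simp)
  then show ?thesis using dom False unfolding disj_dominated_def by linarith
qed

locale subdivision3 =
  fixes V :: "'a set" and E :: "'a \<Rightarrow> 'a \<Rightarrow> bool" and u v x1 x2 x3 :: 'a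
  assumes graph: "simple_graph V E" and edge_uv: "E u v"
    and x1_notin: "x1 \<notin> V" and x2_notin: "x2 \<notin> V" and x3_notin: "x3 \<notin> V"
    and x1_x2: "x1 \<noteq> x2" and x1_x3: "x1 \<noteq> x3" and x2_x3: "x2 \<noteq> x3"
begin

abbreviation E' :: "'a \<Rightarrow> 'a \<Rightarrow> bool" where
  "E' \<equiv> subdiv3_edges E u v x1 x2 x3"

abbreviation V' :: "'a set" where
  "V' \<equiv> V \<union> {x1, x2, x3}"

lemma edge_in_V: "E a b \<Longrightarrow> a \<in> V \<and> b \<in> V"
  and edge_sym: "E a b \<Longrightarrow> E b a"
  and edge_irrefl: "\<not> E a a"
  and finite_V: "finite V"
  using graph unfolding simple_graph_def by blast+

lemma u_in_V: "u \<in> V" and v_in_V: "v \<in> V"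
  using edge_in_V[OF edge_uv] by auto

lemma subdiv_edge_old_iff:
  "a \<in> V \<Longrightarrow> b \<in> V \<Longrightarrow> E' a b \<longleftrightarrow> E a b \<and> {a, b} \<noteq> {u, v}"
  unfolding subdiv3_edges_def doubleton_eq_iff using x1_notin x2_notin x3_notin by blast

lemma subdiv_edge_x1: "E' a x1 \<longleftrightarrow> a = u \<or> a = x2" "E' x1 a \<longleftrightarrow> a = u \<or> a = x2"
  and subdiv_edge_x2: "E' a x2 \<longleftrightarrow> a = x1 \<or> a = x3" "E' x2 a \<longleftrightarrow> a = x1 \<or> a = x3"
  and subdiv_edge_x3: "E' a x3 \<longleftrightarrow> a = v \<or> a = x2" "E' x3 a \<longleftrightarrow> a = v \<or> a = x2"
  unfolding subdiv3_edges_def doubleton_eq_iff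
  using x1_notin x2_notin x3_notin x1_x2 x1_x3 x2_x3 u_in_V v_in_V edge_in_V by blast+

lemma subdiv3_edges_swap: "subdiv3_edges E v u x3 x2 x1 = E'"
  unfolding subdiv3_edges_def by (intro ext) (simp add: doubleton_eq_iff, blast)

lemma subdivision3_swap: "subdivision3 V E v u x3 x2 x1"
  using graph edge_sym[OF edge_uv] x1_notin x2_notin x3_notin x1_x2 x1_x3 x2_x3
  by unfold_locales auto

lemma at_distance_two_subdiv:
  assumes "E x m" "E m c" "x \<noteq> c" "\<not> E x c" "{x, m} \<noteq> {u, v}" "{m, c} \<noteq> {u, v}"
  shows "at_distance_two E' x c"
proof -
  have "x \<in> V" "m \<in> V" "c \<in> V" using edge_in_V assms(1,2) by blast+
  then show ?thesis unfolding at_distance_two_def using assms subdiv_edge_old_iff by metis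
qed

lemma disj_dominated_subdiv_old_vertex:
  assumes "S \<subseteq> V" "u \<notin> S" "v \<notin> S" "x \<in> V" "x \<noteq> u" "x \<noteq> v"
    and "disj_dominated E S x" "S \<subseteq> T" "finite T"
  shows "disj_dominated E' T x"
proof (rule disj_dominated_mono[OF \<open>disj_dominated E S x\<close> \<open>S \<subseteq> T\<close> \<open>finite T\<close>])
  show "E' x s" if "s \<in> S" "E x s" for s
    using that assms subdiv_edge_old_iff edge_in_V by (metis doubleton_eq_iff)
  show "at_distance_two E' x c" if c: "c \<in> S" "at_distance_two E x c" for c
  proof -
    obtain m where "E x m" "E m c" "x \<noteq> c" "\<not> E x c"
      using c(2) unfolding at_distance_two_def by blast
    then show ?thesis
      using c(1) assms by (intro at_distance_two_subdiv) (auto simp: doubleton_eq_iff)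
  qed
qed

lemma disj_dominated_subdiv_if_u_in:
  assumes S: "S \<subseteq> V" "u \<in> S" and x: "x \<in> V" "x \<notin> S" and dom: "disj_dominated E S x"
  shows "disj_dominated E' (insert x3 S) x"
proof -
  have fin: "finite (insert x3 S)" using S finite_V finite_subset by blast
  have "x \<noteq> u" using x S by blast
  consider "x = v" | "x \<noteq> v" "\<exists>s\<in>S. E x s" | "x \<noteq> v" "E x v" "\<forall>s\<in>S. \<not> E x s"
    | "x \<noteq> v" "\<not> E x v"
    by blast
  then show ?thesis
  proof cases
    case 1
    then show ?thesis unfolding disj_dominated_def using subdiv_edge_x3 by blast
  next
    case 2
    then obtain s where "s \<in> S" "E x s" by blast
    then have "E' x s"
      using 2 S x \<open>x \<noteq> u\<close> edge_in_V by (auto simp: subdiv_edge_old_iff doubleton_eq_iff)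
    then show ?thesis unfolding disj_dominated_def using \<open>s \<in> S\<close> by blast
  next
    case 3
    \<comment> \<open>the path x v u is cut, but x v x3 is a new one\<close>
    have "x \<noteq> x2" "x \<noteq> x3" "E' x v" "E' v x3"
      using x x2_notin x3_notin 3 \<open>x \<noteq> u\<close> v_in_V
      by (auto simp: subdiv_edge_x3 subdiv_edge_old_iff doubleton_eq_iff)
    then have new: "at_distance_two E' x x3"
      unfolding at_distance_two_def using 3 by (auto simp: subdiv_edge_x3)
    have "2 \<le> card {s\<in>S. at_distance_two E x s}" using dom 3 unfolding disj_dominated_def by blast
    from ex_other_if_card_ge_2[OF this, of u]
    obtain c where c: "c \<in> S" "at_distance_two E x c" "c \<noteq> u" by blast
    then obtain m where m: "E x m" "E m c" "x \<noteq> c" "\<not> E x c"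
      unfolding at_distance_two_def by blast
    have "m \<noteq> u" using m(1) 3 S by blast
    then have old: "at_distance_two E' x c"
      using m \<open>x \<noteq> u\<close> 3 c(3) by (intro at_distance_two_subdiv) (auto simp: doubleton_eq_iff)
    have "c \<noteq> x3" using c S x3_notin by blast
    then have "2 \<le> card {s\<in>insert x3 S. at_distance_two E' x s}"
      using fin old new c by (intro card_ge_2_if_distinct[of _ c x3]) auto
    then show ?thesis unfolding disj_dominated_def by blast
  next
    case 4
    show ?thesis
    proof (rule disj_dominated_mono[OF dom _ fin])
      show "E' x s" if "s \<in> S" "E x s" for s
        using that 4 S x \<open>x \<noteq> u\<close> edge_in_V by (auto simp: subdiv_edge_old_iff doubleton_eq_iff)
      show "at_distance_two E' x c"
        if c: "c \<in> S" "\<forall>s\<in>S. \<not> E x s" "at_distance_two E x c" for c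
      proof -
        obtain m where m: "E x m" "E m c" "x \<noteq> c" "\<not> E x c"
          using c(3) unfolding at_distance_two_def by blast
        have "m \<noteq> u" "m \<noteq> v" using m(1) c(2) S 4 by blast+
        then show ?thesis
          using m \<open>x \<noteq> u\<close> by (intro at_distance_two_subdiv) (auto simp: doubleton_eq_iff)
      qed
    qed blast
  qed
qed

lemma disj_dom_set_subdiv_if_u_in:
  assumes S: "disj_dom_set V E S" and "u \<in> S"
  shows "disj_dom_set V' E' (insert x3 S)"
  unfolding disj_dom_set_iff
proof (intro conjI ballI)
  have SV: "S \<subseteq> V" using S unfolding disj_dom_set_iff by blast
  then show "insert x3 S \<subseteq> V'" by blast
  fix x assume "x \<in> V' - insert x3 S"
  then consider "x = x1" | "x = x2" | "x \<in> V" "x \<notin> S" by blast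
  then show "disj_dominated E' (insert x3 S) x"
  proof cases
    case 1
    then show ?thesis unfolding disj_dominated_def using \<open>u \<in> S\<close> subdiv_edge_x1 by blast
  next
    case 2
    then show ?thesis unfolding disj_dominated_def using subdiv_edge_x2 by blast
  next
    case 3
    then show ?thesis
      using S SV \<open>u \<in> S\<close> disj_dominated_subdiv_if_u_in unfolding disj_dom_set_iff by blast
  qed
qed

lemma disj_dom_set_subdiv_if_v_dominated:
  assumes S: "disj_dom_set V E S" and "u \<notin> S" "v \<notin> S" "s \<in> S" "E v s"
  shows "disj_dom_set V' E' (insert x1 S)"
proof -
  have SV: "S \<subseteq> V" using S unfolding disj_dom_set_iff by blast
  have fin: "finite (insert x1 S)" using SV finite_V finite_subset by blast
  have "s \<in> V" "s \<noteq> u" "s \<noteq> v" using SV assms edge_irrefl by blast+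
  then have "E' v s" using \<open>E v s\<close> v_in_V by (auto simp: subdiv_edge_old_iff doubleton_eq_iff)
  have "x1 \<noteq> v" "x3 \<noteq> s" "x1 \<noteq> s" using x1_notin x3_notin v_in_V \<open>s \<in> V\<close> by blast+
  then have "at_distance_two E' x3 x1" "at_distance_two E' x3 s"
    unfolding at_distance_two_def
    using \<open>E' v s\<close> \<open>s \<noteq> v\<close> \<open>s \<in> V\<close> x1_x2 x1_x3 x2_notin subdiv_edge_x2 subdiv_edge_x3 by metis+
  then have x3: "disj_dominated E' (insert x1 S) x3"
    unfolding disj_dominated_def using fin \<open>s \<in> S\<close> \<open>x1 \<noteq> s\<close>
    by (intro disjI2 card_ge_2_if_distinct[of _ x1 s]) auto
  show ?thesis unfolding disj_dom_set_iff
  proof (intro conjI ballI)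
    show "insert x1 S \<subseteq> V'" using SV by blast
    fix x assume "x \<in> V' - insert x1 S"
    then consider "x = x2" | "x = x3" | "x = u" | "x = v" | "x \<in> V - S" "x \<noteq> u" "x \<noteq> v"
      by blast
    then show "disj_dominated E' (insert x1 S) x"
    proof cases
      case 5
      then show ?thesis
        using S SV assms(2,3) fin disj_dominated_subdiv_old_vertex unfolding disj_dom_set_iff
        by (meson DiffD1 subset_insertI)
    qed (use x3 \<open>E' v s\<close> \<open>s \<in> S\<close> subdiv_edge_x1 subdiv_edge_x2 in
         \<open>auto simp: disj_dominated_def\<close>)
  qed
qed

lemma disj_dom_set_subdiv_if_ends_undominated:
  assumes S: "disj_dom_set V E S" and "u \<notin> S" "v \<notin> S"
    and no_nbr: "\<forall>s\<in>S. \<not> E u s" "\<forall>s\<in>S. \<not> E v s"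
  shows "disj_dom_set V' E' (insert x2 S)"
proof -
  have SV: "S \<subseteq> V" using S unfolding disj_dom_set_iff by blast
  have fin: "finite (insert x2 S)" using SV finite_V finite_subset by blast
  have ends: "disj_dominated E' (insert x2 S) w" if "w = u \<or> w = v" for w
  proof (rule disj_dominated_mono[OF _ _ fin])
    show "disj_dominated E S w"
      using that S assms(2,3) u_in_V v_in_V unfolding disj_dom_set_iff by blast
    show "at_distance_two E' w c" if c: "c \<in> S" "at_distance_two E w c" for c
    proof -
      obtain m where m: "E w m" "E m c" "w \<noteq> c" "\<not> E w c"
        using c(2) unfolding at_distance_two_def by blast
      \<comment> \<open>the middle vertex is adjacent to S, unlike u and v\<close>
      have "m \<noteq> u" "m \<noteq> v" using m(2) c(1) no_nbr by blast+
      then show ?thesis using m by (intro at_distance_two_subdiv) (auto simp: doubleton_eq_iff)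
    qed
  qed (use that no_nbr in auto)
  show ?thesis unfolding disj_dom_set_iff
  proof (intro conjI ballI)
    show "insert x2 S \<subseteq> V'" using SV by blast
    fix x assume "x \<in> V' - insert x2 S"
    then consider "x = x1" | "x = x3" | "x = u \<or> x = v" | "x \<in> V - S" "x \<noteq> u" "x \<noteq> v"
      by blast
    then show "disj_dominated E' (insert x2 S) x"
    proof cases
      case 4
      then show ?thesis
        using S SV assms(2,3) fin disj_dominated_subdiv_old_vertex unfolding disj_dom_set_iff
        by (meson DiffD1 subset_insertI)
    qed (use ends subdiv_edge_x1 subdiv_edge_x3 in \<open>auto simp: disj_dominated_def\<close>)
  qed
qed

lemma disj_dom_num_subdiv3_le: "disj_dom_num V' E' \<le> disj_dom_num V E + 1"
proof -
  interpret swapped: subdivision3 V E v u x3 x2 x1 by (rule subdivision3_swap)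
  have V'_swap: "V \<union> {x3, x2, x1} = V'" by blast
  obtain S where S: "disj_dom_set V E S" "card S = disj_dom_num V E"
    using ex_min_disj_dom_set by blast
  have "\<exists>y. disj_dom_set V' E' (insert y S)"
  proof -
    consider "u \<in> S" | "v \<in> S" | s where "u \<notin> S" "v \<notin> S" "s \<in> S" "E v s"
      | s where "u \<notin> S" "v \<notin> S" "s \<in> S" "E u s"
      | "u \<notin> S" "v \<notin> S" "\<forall>s\<in>S. \<not> E u s" "\<forall>s\<in>S. \<not> E v s"
      by blast
    then show ?thesis
    proof cases
      case 1
      then show ?thesis using disj_dom_set_subdiv_if_u_in S(1) by blast
    next
      case 2
      then show ?thesis
        using swapped.disj_dom_set_subdiv_if_u_in S(1) unfolding subdiv3_edges_swap V'_swap by blast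
    next
      case 3
      then show ?thesis using disj_dom_set_subdiv_if_v_dominated S(1) by blast
    next
      case 4
      then show ?thesis
        using swapped.disj_dom_set_subdiv_if_v_dominated S(1)
        unfolding subdiv3_edges_swap V'_swap by blast
    next
      case 5
      then show ?thesis using disj_dom_set_subdiv_if_ends_undominated S(1) by blast
    qed
  qed
  then obtain y where "disj_dom_set V' E' (insert y S)" by blast
  then have "disj_dom_num V' E' \<le> card (insert y S)" by (rule disj_dom_num_le)
  also have "\<dots> \<le> card S + 1" by (cases "finite S") (auto simp: card_insert_if)
  finally show ?thesis using S(2) by simp
qed

end

theorem lemma2p3:
  fixes V :: "'a set" and E :: "'a \<Rightarrow> 'a \<Rightarrow> bool" and u v x1 x2 x3 :: 'a
  assumes "simple_graph V E" and "connected_graph V E"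
    and "E u v"
    and "x1 \<notin> V" and "x2 \<notin> V" and "x3 \<notin> V"
    and "x1 \<noteq> x2" and "x1 \<noteq> x3" and "x2 \<noteq> x3"
    and "real (disj_dom_num V E) \<le> real (card V) / 3"
  shows "real (disj_dom_num (V \<union> {x1, x2, x3}) (subdiv3_edges E u v x1 x2 x3))
           \<le> real (card (V \<union> {x1, x2, x3})) / 3"
proof -
  interpret subdivision3 V E u v x1 x2 x3
    using assms by unfold_locales
  have "card (V \<union> {x1, x2, x3}) = card V + 3"
    using assms(4-9) finite_V by simp
  then show ?thesis
    using disj_dom_num_subdiv3_le assms(10) by simp
qed

end
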